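(* Let $\ell \in \mathscr{L}_q$ and let $H_q[N(v_\ell)]$ be the subgraph of $H_q$ induced on the neighbourhood of $v_\ell$. Then the edge set of $H_q[N(v_\ell)]$ is the edge-disjoint union of the edge sets of the following cliques: (i) $q+1$ cliques of order $q^2-1$, namely $C_p \setminus \{v_\ell\}$ for the $q+1$ points $p \in \ell \cap \mathscr{U}_q$ (these are pairwise vertex-disjoint); and (ii) $q^3-q$ cliques of order $q+1$, one for each point $p \in \mathscr{U}_q \setminus \ell$, namely $C_p \cap N(v_\ell)$, consisting of the $q+1$ secants through $p$ and through a point of $\ell \cap \mathscr{U}_q$. Every edge of $H_q[N(v_\ell)]$ lies in exactly one of these cliques. In particular, the graph $G_{v_\ell}$ is the union of $q^3-q$ edge-disjoint cliques of order $q+1$.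
   Context: Let $q$ be a prime power and $PG(2,q^2)$ the projective plane over $\mathbb{F}_{q^2}$. The Hermitian unital is $\mathscr{U}_q = \{\langle X,Y,Z\rangle : X^{q+1}+Y^{q+1}+Z^{q+1}=0\}$, a set of points of $PG(2,q^2)$. Every line of $PG(2,q^2)$ meets $\mathscr{U}_q$ in exactly $1$ or exactly $q+1$ points; lines meeting it in $q+1$ points are called secants, and $\mathscr{L}_q$ denotes the set of secants. The graph $H_q$ has vertex set $\{v_\ell : \ell \in \mathscr{L}_q\}$, with $v_{\ell_1} \sim v_{\ell_2}$ iff $\ell_1 \neq \ell_2$ and $\ell_1 \cap \ell_2 \in \mathscr{U}_q$. For each point $p \in \mathscr{U}_q$, let $C_p = \{v_\ell : p \in \ell \in \mathscr{L}_q\}$. For $\ell \in \mathscr{L}_q$, $G_{v_\ell}$ denotes the graph on vertex set $N(v_\ell)$ in which $v_{\ell_1} \sim v_{\ell_2}$ iff $\ell_1 \cap \ell_2 \in \mathscr{U}_q \setminus \ell$. *)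

theory Defs
  imports "HOL-Computational_Algebra.Primes" "HOL-Library.Cardinality"
begin

type_synonym 'a vec3 = "'a \<times> 'a \<times> 'a"

definition pp :: "'a::field vec3 \<Rightarrow> 'a vec3 set" where
  "pp v = {(c * fst v, c * fst (snd v), c * snd (snd v)) | c. c \<noteq> 0}"

definition PG_points :: "'a::field vec3 set set" where
  "PG_points = {pp v | v. v \<noteq> (0,0,0)}"

definition PG_line :: "'a::field vec3 \<Rightarrow> 'a vec3 set set" where
  "PG_line u = {pp v | v. v \<noteq> (0,0,0) \<and>
      fst u * fst v + fst (snd u) * fst (snd v) + snd (snd u) * snd (snd v) = 0}"

definition PG_lines :: "'a::field vec3 set set set" where
  "PG_lines = {PG_line u | u. u \<noteq> (0,0,0)}"

(* Hermitian unital over F = F_{q^2} *)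
definition herm_unital :: "nat \<Rightarrow> 'a::field vec3 set set" where
  "herm_unital q = {pp (x,y,z) | x y z. (x,y,z) \<noteq> (0,0,0) \<and>
      x ^ (q+1) + y ^ (q+1) + z ^ (q+1) = 0}"

definition secants :: "nat \<Rightarrow> 'a::field vec3 set set set" where
  "secants q = {l \<in> PG_lines. card (l \<inter> herm_unital q) = q + 1}"

(* adjacency in H_q (vertices v_l identified with secants l) *)
definition H_adj :: "nat \<Rightarrow> 'a::field vec3 set set \<Rightarrow> 'a vec3 set set \<Rightarrow> bool" where
  "H_adj q l1 l2 \<longleftrightarrow> l1 \<in> secants q \<and> l2 \<in> secants q \<and> l1 \<noteq> l2 \<and>
      (\<exists>p. l1 \<inter> l2 = {p} \<and> p \<in> herm_unital q)"

definition nbhd :: "nat \<Rightarrow> 'a::field vec3 set set \<Rightarrow> 'a vec3 set set set" where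
  "nbhd q l = {m. H_adj q l m}"

definition C_pt :: "nat \<Rightarrow> 'a::field vec3 set \<Rightarrow> 'a vec3 set set set" where
  "C_pt q p = {l \<in> secants q. p \<in> l}"

definition ind_edges :: "nat \<Rightarrow> 'a::field vec3 set set \<Rightarrow> 'a vec3 set set set set" where
  "ind_edges q l = {{m1, m2} | m1 m2. m1 \<in> nbhd q l \<and> m2 \<in> nbhd q l \<and> H_adj q m1 m2}"

definition G_edges :: "nat \<Rightarrow> 'a::field vec3 set set \<Rightarrow> 'a vec3 set set set set" where
  "G_edges q l = {{m1, m2} | m1 m2. m1 \<in> nbhd q l \<and> m2 \<in> nbhd q l \<and> m1 \<noteq> m2 \<and>
      (\<exists>p. m1 \<inter> m2 = {p} \<and> p \<in> herm_unital q - l)}"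

definition is_clique :: "nat \<Rightarrow> 'a::field vec3 set set set \<Rightarrow> bool" where
  "is_clique q K \<longleftrightarrow> (\<forall>a\<in>K. \<forall>b\<in>K. a \<noteq> b \<longrightarrow> H_adj q a b)"

definition clique_edges :: "'b set \<Rightarrow> 'b set set" where
  "clique_edges K = {{a, b} | a b. a \<in> K \<and> b \<in> K \<and> a \<noteq> b}"

end

(* Two distinct lines meet in at most one point.  Hence two adjacent neighbours of v_l meet
   in a unique unital point p, and their edge lies in the clique at p and in no other.
   The clique sizes are counts over GF(q^2) with conjugation x -> x^q: on the line through
   isotropic <a> and <b> the point <b + t a> is isotropic iff Tr (t h(a, b)) = 0, and
   h(a, b) <> 0, so every secant carries q + 1 unital points; counting isotropic vectors via
   the norm map gives q^3 + 1 unital points, hence q^2 secants through each of them; and a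
   unital point p off l sees the q + 1 unital points of l along q + 1 distinct secants. *)

theory Submission
  imports Defs "HOL-Number_Theory.Residues" "HOL-Algebra.FiniteProduct"
    "HOL-Computational_Algebra.Polynomial" "HOL-Library.Product_Plus"
begin

section \<open>Finite fields with an involutory Frobenius map\<close>

lemma field_power_card_eq_same:
  fixes x :: "'a::{field,finite}"
  shows "x ^ CARD('a) = x"
proof (cases "x = 0")
  case True
  then show ?thesis by simp
next
  case False
  define G :: "'a monoid" where "G = \<lparr>carrier = UNIV - {0}, monoid.mult = (*), one = 1\<rparr>"
  have G: "comm_group G"
  proof (rule comm_groupI)
    fix y assume "y \<in> carrier G"
    then show "\<exists>z\<in>carrier G. z \<otimes>\<^bsub>G\<^esub> y = \<one>\<^bsub>G\<^esub>"
      by (intro bexI[of _ "inverse y"]) (auto simp: G_def)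
  qed (simp_all add: G_def mult_ac)
  have "x [^]\<^bsub>G\<^esub> n = x ^ n" for n
    by (induction n) (simp_all add: G_def)
  moreover have "x [^]\<^bsub>G\<^esub> card (carrier G) = \<one>\<^bsub>G\<^esub>"
    by (rule comm_group.power_order_eq_one[OF G]) (use False in \<open>simp_all add: G_def\<close>)
  moreover have "card (carrier G) = CARD('a) - 1"
    by (simp add: G_def card_Diff_singleton)
  ultimately have "x ^ (CARD('a) - 1) = 1"
    by (simp add: G_def)
  then show ?thesis
    by (subst power_eq_if) simp
qed

lemma card_roots_trinomial_le:
  fixes a b :: "'a::field"
  assumes "n \<ge> 2"
  shows "card {x. x ^ n + a * x + b = 0} \<le> n"
proof -
  define p where "p = monom 1 n + [:b, a:]"
  have "degree [:b, a:] < degree (monom (1::'a) n)"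
    using assms by (simp add: degree_monom_eq degree_pCons_eq_if)
  then have "degree p = n"
    unfolding p_def by (subst degree_add_eq_left) (simp_all add: degree_monom_eq)
  with assms have "card {x. poly p x = 0} \<le> n"
    by (metis card_poly_roots_bound degree_0 not_numeral_le_zero)
  moreover have "{x. poly p x = 0} = {x. x ^ n + a * x + b = 0}"
    unfolding p_def by (auto simp: poly_monom algebra_simps)
  ultimately show ?thesis
    by simp
qed

lemma card_fibre_eq_if_fibres_le:
  assumes "finite A" "finite B" "f ` A \<subseteq> B" "card B \<le> b"
    and fibre_le: "\<And>z. z \<in> B \<Longrightarrow> card {x\<in>A. f x = z} \<le> k"
    and "card A = b * k" "y \<in> B"
  shows "card {x\<in>A. f x = y} = k"
proof (rule ccontr)
  assume "card {x\<in>A. f x = y} \<noteq> k"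
  with fibre_le \<open>y \<in> B\<close> have less: "card {x\<in>A. f x = y} < k"
    by (meson le_neq_implies_less)
  have "card A = card (\<Union>z\<in>B. {x\<in>A. f x = z})"
    using \<open>f ` A \<subseteq> B\<close> by (intro arg_cong[where f = card]) auto
  also have "\<dots> = (\<Sum>z\<in>B. card {x\<in>A. f x = z})"
    using \<open>finite A\<close> \<open>finite B\<close> by (intro card_UN_disjoint) auto
  also have "\<dots> < (\<Sum>z\<in>B. k)"
    using fibre_le less \<open>y \<in> B\<close> \<open>finite B\<close> by (intro sum_strict_mono_ex1) auto
  also have "\<dots> \<le> b * k"
    using \<open>card B \<le> b\<close> by simp
  finally show False
    using \<open>card A = b * k\<close> by simp
qed

locale frobenius_field =
  fixes field_type :: "'a::{field,finite} itself" and q :: nat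
  assumes q_ge_2: "q \<ge> 2"
    and card_field: "CARD('a) = q ^ 2"
    and frobenius_add: "\<And>x y :: 'a. (x + y) ^ q = x ^ q + y ^ q"

lemma frobenius_field_prime_power:
  assumes "\<exists>p k. prime p \<and> k \<ge> 1 \<and> q = p ^ k"
    and "CARD('a::{field,finite}) = q ^ 2"
  shows "frobenius_field TYPE('a) q"
proof
  obtain p k where pk: "prime p" "k \<ge> 1" "q = p ^ k"
    using assms(1) by blast
  have char_prime: "prime CHAR('a)"
    using prime_CHAR_semidom[where ?'a = 'a] finite_imp_CHAR_pos[where ?'a = 'a] by simp
  have "CHAR('a) dvd p ^ (2 * k)"
    using CHAR_dvd_CARD[where ?'a = 'a] assms(2) pk(3) by (simp add: power_mult mult.commute)
  then have "CHAR('a) = p"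
    using char_prime pk(1) by (metis prime_dvd_power primes_dvd_imp_eq)
  then show "(x + y) ^ q = x ^ q + y ^ q" for x y :: 'a
    using freshmans_dream'[OF char_prime, of q k x y] pk(3) by simp
  show "q \<ge> 2"
    using self_le_power[of p k] prime_ge_2_nat[OF pk(1)] pk(2,3) by simp
qed fact

context frobenius_field
begin

lemma frobenius_frobenius [simp]: "(x ^ q) ^ q = (x :: 'a)"
  using field_power_card_eq_same[of x] by (simp add: card_field power2_eq_square flip: power_mult)

lemma frobenius_minus: "(- x) ^ q = - (x ^ q :: 'a)"
proof -
  have "x ^ q + (- x) ^ q = 0"
    using frobenius_add[of x "- x"] q_ge_2 by (simp add: zero_power)
  then show ?thesis
    by (simp add: add_eq_0_iff)
qed

lemma frobenius_diff: "(x - y) ^ q = x ^ q - (y ^ q :: 'a)"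
  using frobenius_add[of x "- y"] by (simp add: frobenius_minus)

definition subfield :: "'a set" where
  "subfield = {y. y ^ q = y}"

lemma norm_in_subfield: "x ^ (q + 1) \<in> subfield"
proof -
  have "(x ^ (q + 1)) ^ q = (x ^ q) ^ q * x ^ q"
    by (simp add: power_mult_distrib)
  then show ?thesis
    by (simp add: subfield_def mult.commute)
qed

lemma card_subfield_le: "card subfield \<le> q"
proof -
  have "subfield = {x. x ^ q + (- 1) * x + 0 = 0}"
    by (simp add: subfield_def)
  then show ?thesis
    using card_roots_trinomial_le[OF q_ge_2] by metis
qed

lemma card_trace_fibre:
  assumes "y \<in> subfield"
  shows "card {s :: 'a. s + s ^ q = y} = q"
proof -
  have "card {s \<in> UNIV. s + s ^ q = y} = q"
  proof (rule card_fibre_eq_if_fibres_le[where B = subfield and b = q])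
    show "(\<lambda>s. s + s ^ q) ` UNIV \<subseteq> subfield"
      by (auto simp: subfield_def frobenius_add add.commute)
    show "card {s \<in> UNIV. s + s ^ q = z} \<le> q" for z :: 'a
    proof -
      have "{s \<in> UNIV. s + s ^ q = z} = {s :: 'a. s ^ q + 1 * s + (- z) = 0}"
        by (auto simp: algebra_simps)
      then show ?thesis
        using card_roots_trinomial_le[OF q_ge_2] by metis
    qed
  qed (use assms card_subfield_le card_field in \<open>auto simp: power2_eq_square\<close>)
  then show ?thesis
    by simp
qed

lemma card_norm_fibre:
  assumes "y \<in> subfield"
  shows "card {x :: 'a. x ^ (q + 1) = y} = (if y = 0 then 1 else q + 1)"
proof (cases "y = 0")
  case False
  have "card {x \<in> UNIV - {0}. x ^ (q + 1) = y} = q + 1"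
  proof (rule card_fibre_eq_if_fibres_le[where B = "subfield - {0}" and b = "q - 1"])
    show "(\<lambda>x. x ^ (q + 1)) ` (UNIV - {0}) \<subseteq> subfield - {0}"
      using norm_in_subfield by auto
    show "card (subfield - {0}) \<le> q - 1"
      using card_subfield_le q_ge_2 by (simp add: subfield_def card_Diff_singleton zero_power)
    show "card {x \<in> UNIV - {0}. x ^ (q + 1) = z} \<le> q + 1" for z :: 'a
    proof -
      have "card {x. x ^ (q + 1) + 0 * x + (- z) = 0} \<le> q + 1"
        using q_ge_2 by (intro card_roots_trinomial_le) simp
      moreover have "{x \<in> UNIV - {0}. x ^ (q + 1) = z} \<subseteq> {x. x ^ (q + 1) + 0 * x + (- z) = 0}"
        by auto
      ultimately show ?thesis
        by (meson card_mono finite le_trans)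
    qed
    show "card (UNIV - {0 :: 'a}) = (q - 1) * (q + 1)"
      using card_field q_ge_2 by (simp add: card_Diff_singleton power2_eq_square algebra_simps)
  qed (use assms False in auto)
  moreover have "{x \<in> UNIV - {0}. x ^ (q + 1) = y} = {x. x ^ (q + 1) = y}"
    using False by auto
  ultimately show ?thesis
    using False by simp
next
  case True
  then have "{x :: 'a. x ^ (q + 1) = y} = {0}"
    by auto
  then show ?thesis
    using True by simp
qed

end

section \<open>Dot and cross products\<close>

fun dot3 :: "'a::field vec3 \<Rightarrow> 'a vec3 \<Rightarrow> 'a" where
  "dot3 (a1, a2, a3) (b1, b2, b3) = a1 * b1 + a2 * b2 + a3 * b3"

fun cross3 :: "'a::field vec3 \<Rightarrow> 'a vec3 \<Rightarrow> 'a vec3" where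
  "cross3 (a1, a2, a3) (b1, b2, b3) = (a2 * b3 - a3 * b2, a3 * b1 - a1 * b3, a1 * b2 - a2 * b1)"

fun scale3 :: "'a::field \<Rightarrow> 'a vec3 \<Rightarrow> 'a vec3" where
  "scale3 c (a1, a2, a3) = (c * a1, c * a2, c * a3)"

lemma vec3_eq_0_iff: "(x, y, z) = 0 \<longleftrightarrow> x = 0 \<and> y = 0 \<and> z = 0"
  by (simp add: zero_prod_def)

lemma scale3_scale3 [simp]: "scale3 c (scale3 d v) = scale3 (c * d) v"
  by (cases v rule: prod_cases3) simp

lemma scale3_one [simp]: "scale3 1 v = v"
  by (cases v rule: prod_cases3) simp

lemma scale3_eq_0_iff [simp]: "scale3 c v = 0 \<longleftrightarrow> c = 0 \<or> v = 0"
  by (cases v rule: prod_cases3) (auto simp: zero_prod_def)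

lemma scale3_zero_left [simp]: "scale3 0 v = 0"
  by simp

lemma scale3_add_right: "scale3 c (v + w) = scale3 c v + scale3 c w"
  by (cases v rule: prod_cases3; cases w rule: prod_cases3) (simp add: algebra_simps)

lemma scale3_eq_iff_inverse: "d \<noteq> 0 \<Longrightarrow> scale3 d v = w \<longleftrightarrow> v = scale3 (inverse d) w"
  by auto

lemma scale3_right_cancel: "v \<noteq> 0 \<Longrightarrow> scale3 c v = scale3 d v \<longleftrightarrow> c = d"
  by (cases v rule: prod_cases3) (auto simp: zero_prod_def)

lemma dot3_commute: "dot3 u v = dot3 v u"
  by (cases u rule: prod_cases3; cases v rule: prod_cases3) (simp add: mult.commute)

lemma dot3_scale3_left [simp]: "dot3 (scale3 c u) v = c * dot3 u v"
  by (cases u rule: prod_cases3; cases v rule: prod_cases3) (simp add: algebra_simps)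

lemma dot3_scale3_right [simp]: "dot3 u (scale3 c v) = c * dot3 u v"
  by (cases u rule: prod_cases3; cases v rule: prod_cases3) (simp add: algebra_simps)

lemma dot3_add_right [simp]: "dot3 u (v + w) = dot3 u v + dot3 u w"
  by (cases u rule: prod_cases3; cases v rule: prod_cases3; cases w rule: prod_cases3)
    (simp add: algebra_simps)

lemma dot3_cross3_left [simp]: "dot3 (cross3 a b) a = 0" "dot3 (cross3 a b) b = 0"
  by (cases a rule: prod_cases3; cases b rule: prod_cases3; simp add: algebra_simps)+

lemma cross3_self [simp]: "cross3 a a = 0"
  by (cases a rule: prod_cases3) (simp add: zero_prod_def mult.commute)

lemma cross3_zero_left [simp]: "cross3 0 a = 0"
  by (cases a rule: prod_cases3) (simp add: zero_prod_def)

lemma cross3_zero_right [simp]: "cross3 a 0 = 0"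
  by (cases a rule: prod_cases3) (simp add: zero_prod_def)

lemma cross3_scale3_left [simp]: "cross3 (scale3 c a) b = scale3 c (cross3 a b)"
  by (cases a rule: prod_cases3; cases b rule: prod_cases3) (simp add: algebra_simps)

lemma cross3_scale3_right [simp]: "cross3 a (scale3 c b) = scale3 c (cross3 a b)"
  by (cases a rule: prod_cases3; cases b rule: prod_cases3) (simp add: algebra_simps)

lemma cross3_add_scale3_right: "cross3 a (b + scale3 t a) = cross3 a b"
  by (cases a rule: prod_cases3; cases b rule: prod_cases3) (simp add: algebra_simps)

lemma cross3_add_scale3: "cross3 (b + scale3 t a) (b + scale3 s a) = scale3 (t - s) (cross3 a b)"
  by (cases a rule: prod_cases3; cases b rule: prod_cases3) (simp add: algebra_simps)

lemma cross3_cross3: "cross3 (cross3 u v) w = scale3 (dot3 u w) v - scale3 (dot3 v w) u"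
  by (cases u rule: prod_cases3; cases v rule: prod_cases3; cases w rule: prod_cases3)
    (simp add: algebra_simps)

text \<open>Cramer's rule, written with the determinant \<open>det (a, b, c) = dot3 (cross3 a b) c\<close>.\<close>
lemma cramer3:
  "scale3 (dot3 (cross3 a b) e) v =
     scale3 (dot3 (cross3 v b) e) a + scale3 (dot3 (cross3 a v) e) b + scale3 (dot3 (cross3 a b) v) e"
  by (cases a rule: prod_cases3; cases b rule: prod_cases3; cases v rule: prod_cases3;
      cases e rule: prod_cases3) (simp add: algebra_simps)

lemma ex_dot3_ne_0:
  assumes "v \<noteq> 0"
  obtains e where "dot3 v e \<noteq> 0"
proof -
  obtain v1 v2 v3 where v: "v = (v1, v2, v3)"
    by (cases v rule: prod_cases3)
  consider "v1 \<noteq> 0" | "v2 \<noteq> 0" | "v3 \<noteq> 0"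
    using assms by (auto simp: v vec3_eq_0_iff)
  then show ?thesis
  proof cases
    case 1
    then show ?thesis
      using that[of "(1, 0, 0)"] by (simp add: v)
  next
    case 2
    then show ?thesis
      using that[of "(0, 1, 0)"] by (simp add: v)
  next
    case 3
    then show ?thesis
      using that[of "(0, 0, 1)"] by (simp add: v)
  qed
qed

lemma cross3_eq_0_imp_parallel:
  assumes "v \<noteq> 0" "cross3 v w = 0"
  obtains c where "w = scale3 c v"
proof -
  obtain e where e: "dot3 v e \<noteq> 0"
    using ex_dot3_ne_0[OF assms(1)] by blast
  have "scale3 (dot3 v e) w - scale3 (dot3 w e) v = 0"
    using cross3_cross3[of v w e] assms(2) by simp
  then have "scale3 (dot3 v e) w = scale3 (dot3 w e) v"
    by simp
  then have "w = scale3 (dot3 w e / dot3 v e) v"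
    using e by (simp add: scale3_eq_iff_inverse field_simps)
  then show ?thesis
    using that by blast
qed

lemma orthogonal_imp_parallel_cross3:
  assumes "cross3 a b \<noteq> 0" "dot3 u a = 0" "dot3 u b = 0"
  obtains c where "u = scale3 c (cross3 a b)"
proof -
  have "cross3 (cross3 a b) u = 0"
    using assms(2,3) by (simp add: cross3_cross3 dot3_commute[of _ u])
  then show ?thesis
    using cross3_eq_0_imp_parallel[OF assms(1)] that by blast
qed

lemma orthogonal_cross3_imp_span:
  assumes "cross3 a b \<noteq> 0" "dot3 (cross3 a b) v = 0"
  obtains \<alpha> \<beta> where "v = scale3 \<alpha> a + scale3 \<beta> b"
proof -
  obtain e where e: "dot3 (cross3 a b) e \<noteq> 0"
    using ex_dot3_ne_0[OF assms(1)] by blast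
  define d where "d = dot3 (cross3 a b) e"
  have "scale3 d v = scale3 (dot3 (cross3 v b) e) a + scale3 (dot3 (cross3 a v) e) b"
    using cramer3[of a b e v] assms(2) by (simp add: d_def)
  then have "v = scale3 (dot3 (cross3 v b) e / d) a + scale3 (dot3 (cross3 a v) e / d) b"
    using e by (simp add: d_def scale3_eq_iff_inverse scale3_add_right field_simps)
  then show ?thesis
    using that by blast
qed

section \<open>Points and lines of the projective plane\<close>

lemma pp_eq: "pp v = {scale3 c v | c. c \<noteq> 0}"
  unfolding pp_def by (cases v rule: prod_cases3) simp

lemma mem_pp_iff: "w \<in> pp v \<longleftrightarrow> (\<exists>c. c \<noteq> 0 \<and> w = scale3 c v)"
  unfolding pp_eq by blast

lemma mem_pp_self [simp]: "v \<in> pp v"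
  unfolding mem_pp_iff by (auto intro: exI[of _ 1])

lemma pp_scale3 [simp]: "c \<noteq> 0 \<Longrightarrow> pp (scale3 c v) = pp v"
  unfolding pp_eq by (force intro: exI[of _ "_ * c"] exI[of _ "_ / c"])

lemma pp_eq_imp_scale3:
  assumes "pp v = pp w"
  obtains c where "c \<noteq> 0" "v = scale3 c w"
proof -
  have "v \<in> pp w"
    using assms mem_pp_self[of v] by simp
  then show ?thesis
    using that by (auto simp: mem_pp_iff)
qed

lemma pp_eq_iff_cross3_eq_0:
  assumes "v \<noteq> 0" "w \<noteq> 0"
  shows "pp v = pp w \<longleftrightarrow> cross3 v w = 0"
proof
  assume "pp v = pp w"
  then show "cross3 v w = 0"
    by (metis pp_eq_imp_scale3 cross3_scale3_left cross3_self scale3_eq_0_iff)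
next
  assume "cross3 v w = 0"
  then obtain c where "w = scale3 c v"
    using cross3_eq_0_imp_parallel[OF assms(1)] by blast
  moreover have "c \<noteq> 0"
    using assms(2) calculation by auto
  ultimately show "pp v = pp w"
    by simp
qed

lemma pp_disjoint:
  assumes "pp v \<noteq> pp w"
  shows "pp v \<inter> pp w = {}"
proof (rule equals0I)
  fix x assume "x \<in> pp v \<inter> pp w"
  then obtain c d where "c \<noteq> 0" "x = scale3 c v" "d \<noteq> 0" "x = scale3 d w"
    by (auto simp: mem_pp_iff)
  then have "pp v = pp w"
    by (metis pp_scale3)
  with assms show False ..
qed

lemma card_pp:
  fixes v :: "'a::{field,finite} vec3"
  assumes "v \<noteq> 0"
  shows "card (pp v) = CARD('a) - 1"
proof -
  have "pp v = (\<lambda>c. scale3 c v) ` (UNIV - {0})"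
    unfolding pp_eq by auto
  moreover have "inj_on (\<lambda>c. scale3 c v) (UNIV - {0})"
    using assms by (auto simp: inj_on_def scale3_right_cancel)
  ultimately show ?thesis
    by (simp add: card_image card_Diff_singleton)
qed

lemma dot3_eq_fst_snd: "dot3 u v = fst u * fst v + fst (snd u) * fst (snd v) + snd (snd u) * snd (snd v)"
  by (cases u rule: prod_cases3; cases v rule: prod_cases3) simp

lemma PG_line_eq: "PG_line u = {pp v | v. v \<noteq> 0 \<and> dot3 u v = 0}"
  unfolding PG_line_def by (simp add: dot3_eq_fst_snd zero_prod_def)

lemma PG_lines_eq: "PG_lines = {PG_line u | u. u \<noteq> 0}"
  unfolding PG_lines_def by (simp add: zero_prod_def)

lemma pp_mem_PG_line_iff: "pp v \<in> PG_line u \<longleftrightarrow> v \<noteq> 0 \<and> dot3 u v = 0"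
proof
  assume "pp v \<in> PG_line u"
  then obtain w where "pp v = pp w" "w \<noteq> 0" "dot3 u w = 0"
    unfolding PG_line_eq by blast
  then show "v \<noteq> 0 \<and> dot3 u v = 0"
    by (metis pp_eq_imp_scale3 dot3_scale3_right mult_zero_right scale3_eq_0_iff)
qed (unfold PG_line_eq, blast)

lemma PG_line_cross3 [simp]:
  assumes "cross3 a b \<noteq> 0"
  shows "PG_line (cross3 a b) \<in> PG_lines" "pp a \<in> PG_line (cross3 a b)" "pp b \<in> PG_line (cross3 a b)"
  using assms unfolding PG_lines_eq by (blast, auto simp: pp_mem_PG_line_iff)

lemma PG_line_scale3 [simp]: "c \<noteq> 0 \<Longrightarrow> PG_line (scale3 c u) = PG_line u"
  by (simp add: PG_line_eq)

lemma PG_lines_eq_PG_line_cross3: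
  assumes "L \<in> PG_lines" "pp a \<in> L" "pp b \<in> L" "cross3 a b \<noteq> 0"
  shows "L = PG_line (cross3 a b)"
proof -
  obtain u where u: "L = PG_line u" "u \<noteq> 0"
    using assms(1) unfolding PG_lines_eq by blast
  have "dot3 u a = 0" "dot3 u b = 0"
    using assms(2,3) u(1) by (simp_all add: pp_mem_PG_line_iff)
  then obtain c where c: "u = scale3 c (cross3 a b)"
    using orthogonal_imp_parallel_cross3[OF assms(4)] by blast
  with u(2) have "c \<noteq> 0"
    by auto
  with u(1) c show ?thesis
    by simp
qed

lemma PG_lines_eq_if_two_points:
  assumes "L \<in> PG_lines" "M \<in> PG_lines" "P \<in> L \<inter> M" "Q \<in> L \<inter> M" "P \<noteq> Q"
  shows "L = M"
proof -
  obtain a b where ab: "P = pp a" "Q = pp b" "a \<noteq> 0" "b \<noteq> 0"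
    using assms(1,3,4) unfolding PG_lines_eq PG_line_eq by blast
  with assms(5) have "cross3 a b \<noteq> 0"
    using pp_eq_iff_cross3_eq_0 by blast
  then show ?thesis
    using PG_lines_eq_PG_line_cross3 assms ab by (metis IntD1 IntD2)
qed

lemma PG_lines_inter_eq_singleton:
  assumes "L \<in> PG_lines" "M \<in> PG_lines" "L \<noteq> M" "P \<in> L" "P \<in> M"
  shows "L \<inter> M = {P}"
  using PG_lines_eq_if_two_points[OF assms(1,2)] assms(3-5) by blast

lemma cross3_ne_0_imp_ne_0: "cross3 a b \<noteq> 0 \<Longrightarrow> a \<noteq> 0 \<and> b \<noteq> 0"
  by auto

lemma add_scale3_ne_0: "cross3 a b \<noteq> 0 \<Longrightarrow> b + scale3 t a \<noteq> 0"
  by (metis cross3_add_scale3_right cross3_zero_right)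

lemma PG_line_cross3_eq:
  assumes "cross3 a b \<noteq> 0"
  shows "PG_line (cross3 a b) = insert (pp a) (range (\<lambda>t. pp (b + scale3 t a)))"
proof (intro equalityI subsetI)
  fix X assume "X \<in> PG_line (cross3 a b)"
  then obtain v where v: "X = pp v" "v \<noteq> 0" "dot3 (cross3 a b) v = 0"
    unfolding PG_line_eq by blast
  then obtain \<alpha> \<beta> where v_eq: "v = scale3 \<alpha> a + scale3 \<beta> b"
    using orthogonal_cross3_imp_span[OF assms] by blast
  show "X \<in> insert (pp a) (range (\<lambda>t. pp (b + scale3 t a)))"
  proof (cases "\<beta> = 0")
    case True
    with v(2) v_eq have "\<alpha> \<noteq> 0" "v = scale3 \<alpha> a"
      by auto
    with v(1) show ?thesis
      by simp
  next
    case False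
    with v_eq have "v = scale3 \<beta> (b + scale3 (\<alpha> / \<beta>) a)"
      by (simp add: scale3_add_right add.commute)
    with v(1) False show ?thesis
      by simp
  qed
next
  fix X assume "X \<in> insert (pp a) (range (\<lambda>t. pp (b + scale3 t a)))"
  then show "X \<in> PG_line (cross3 a b)"
    using assms add_scale3_ne_0[OF assms] by (auto simp: pp_mem_PG_line_iff)
qed

lemma inj_pp_add_scale3:
  assumes "cross3 a b \<noteq> 0"
  shows "inj (\<lambda>t. pp (b + scale3 t a))"
proof (rule injI)
  fix t s assume "pp (b + scale3 t a) = pp (b + scale3 s a)"
  then have "cross3 (b + scale3 t a) (b + scale3 s a) = 0"
    using pp_eq_iff_cross3_eq_0 add_scale3_ne_0[OF assms] by blast
  then have "scale3 (t - s) (cross3 a b) = 0"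
    by (simp add: cross3_add_scale3)
  with assms show "t = s"
    by simp
qed

lemma pp_notin_range_pp_add_scale3:
  assumes "cross3 a b \<noteq> 0"
  shows "pp a \<notin> range (\<lambda>t. pp (b + scale3 t a))"
proof
  assume "pp a \<in> range (\<lambda>t. pp (b + scale3 t a))"
  then obtain t where "pp a = pp (b + scale3 t a)"
    by auto
  then have "cross3 a (b + scale3 t a) = 0"
    using pp_eq_iff_cross3_eq_0 add_scale3_ne_0[OF assms] cross3_ne_0_imp_ne_0[OF assms] by blast
  with assms show False
    by (simp add: cross3_add_scale3_right)
qed

section \<open>The Hermitian form and the secants of the unital\<close>

fun herm :: "nat \<Rightarrow> 'a::field vec3 \<Rightarrow> 'a vec3 \<Rightarrow> 'a" where
  "herm q (a1, a2, a3) (b1, b2, b3) = a1 * b1 ^ q + a2 * b2 ^ q + a3 * b3 ^ q"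

fun frob3 :: "nat \<Rightarrow> 'a::field vec3 \<Rightarrow> 'a vec3" where
  "frob3 q (a1, a2, a3) = (a1 ^ q, a2 ^ q, a3 ^ q)"

lemma herm_add_left [simp]: "herm q (x + y) z = herm q x z + herm q y z"
  by (cases x rule: prod_cases3; cases y rule: prod_cases3; cases z rule: prod_cases3)
    (simp add: algebra_simps)

lemma herm_scale3_left [simp]: "herm q (scale3 c x) y = c * herm q x y"
  by (cases x rule: prod_cases3; cases y rule: prod_cases3) (simp add: algebra_simps)

lemma herm_scale3_right [simp]: "herm q x (scale3 c y) = c ^ q * herm q x y"
  by (cases x rule: prod_cases3; cases y rule: prod_cases3) (simp add: algebra_simps power_mult_distrib)

lemma dot3_frob3_left: "dot3 (frob3 q b) a = herm q a b"
  by (cases a rule: prod_cases3; cases b rule: prod_cases3) (simp add: mult.commute)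

lemma herm_unital_eq: "herm_unital q = {pp v | v. v \<noteq> 0 \<and> herm q v v = 0}"
  unfolding herm_unital_def by (auto simp: zero_prod_def)

lemma pp_mem_herm_unital_iff: "pp v \<in> herm_unital q \<longleftrightarrow> v \<noteq> 0 \<and> herm q v v = 0"
proof
  assume "pp v \<in> herm_unital q"
  then obtain w where "pp v = pp w" "w \<noteq> 0" "herm q w w = 0"
    unfolding herm_unital_eq by blast
  then show "v \<noteq> 0 \<and> herm q v v = 0"
    by (metis pp_eq_imp_scale3 herm_scale3_left herm_scale3_right mult_zero_right scale3_eq_0_iff)
qed (unfold herm_unital_eq, blast)

lemma Union_herm_unital: "\<Union>(herm_unital q) = {v. v \<noteq> 0 \<and> herm q v v = 0}"
proof (intro equalityI subsetI)
  fix x assume "x \<in> \<Union>(herm_unital q)"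
  then obtain v c where "v \<noteq> 0" "herm q v v = 0" "c \<noteq> 0" "x = scale3 c v"
    by (auto simp: herm_unital_eq mem_pp_iff)
  then show "x \<in> {v. v \<noteq> 0 \<and> herm q v v = 0}"
    by simp
next
  fix v assume "v \<in> {v. v \<noteq> 0 \<and> herm q v v = 0}"
  then have "pp v \<in> herm_unital q"
    by (simp add: pp_mem_herm_unital_iff)
  then show "v \<in> \<Union>(herm_unital q)"
    using mem_pp_self by blast
qed

lemma pairwise_disjnt_herm_unital: "pairwise disjnt (herm_unital q)"
proof (rule pairwiseI)
  fix X Y assume "X \<in> herm_unital q" "Y \<in> herm_unital q" "X \<noteq> Y"
  then show "disjnt X Y"
    unfolding herm_unital_eq disjnt_def using pp_disjoint by blast
qed

lemma secants_subset_PG_lines: "secants q \<subseteq> PG_lines"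
  by (simp add: secants_def)

context frobenius_field
begin

lemma herm_add_right [simp]: "herm q z (x + y) = herm q z x + herm q z (y :: 'a vec3)"
  by (cases x rule: prod_cases3; cases y rule: prod_cases3; cases z rule: prod_cases3)
    (simp add: frobenius_add algebra_simps)

lemma herm_swap: "herm q b a = herm q (a :: 'a vec3) b ^ q"
  by (cases a rule: prod_cases3; cases b rule: prod_cases3)
    (simp add: frobenius_add power_mult_distrib mult.commute)

lemma herm_line:
  fixes a b :: "'a vec3"
  assumes "herm q a a = 0" "herm q b b = 0"
  shows "herm q (b + scale3 t a) (b + scale3 t a) = t * herm q a b + (t * herm q a b) ^ q"
  using assms by (simp add: herm_swap[of b a] power_mult_distrib)

lemma frob3_cross3: "frob3 q (cross3 a b) = cross3 (frob3 q a) (frob3 q (b :: 'a vec3))"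
  by (cases a rule: prod_cases3; cases b rule: prod_cases3)
    (simp add: frobenius_diff power_mult_distrib)

lemma frob3_eq_0_iff [simp]: "frob3 q v = 0 \<longleftrightarrow> v = (0 :: 'a vec3)"
  using q_ge_2 by (cases v rule: prod_cases3) (simp add: zero_prod_def)

text \<open>If \<open>h(a, b) = 0\<close>, then \<open>a\<close> and \<open>b\<close> are both orthogonal to \<open>a\<^sup>q\<close> and \<open>b\<^sup>q\<close>, hence
  parallel to \<open>a\<^sup>q \<times> b\<^sup>q\<close>.\<close>
lemma herm_ne_0:
  fixes a b :: "'a vec3"
  assumes "herm q a a = 0" "herm q b b = 0" "cross3 a b \<noteq> 0"
  shows "herm q a b \<noteq> 0"
proof
  assume ab: "herm q a b = 0"
  then have ba: "herm q b a = 0"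
    using herm_swap[of b a] q_ge_2 by (simp add: zero_power)
  define d where "d = cross3 (frob3 q a) (frob3 q b)"
  have "d \<noteq> 0"
    using assms(3) by (simp add: d_def flip: frob3_cross3)
  have "cross3 d a = 0" "cross3 d b = 0"
    using assms ab ba by (simp_all add: d_def cross3_cross3 dot3_frob3_left)
  then obtain \<alpha> \<beta> where "a = scale3 \<alpha> d" "b = scale3 \<beta> d"
    using cross3_eq_0_imp_parallel[OF \<open>d \<noteq> 0\<close>] by metis
  with assms(3) show False
    by simp
qed

lemma card_PG_line_cross3_inter_herm_unital:
  fixes a b :: "'a vec3"
  assumes "herm q a a = 0" "herm q b b = 0" "cross3 a b \<noteq> 0"
  shows "card (PG_line (cross3 a b) \<inter> herm_unital q) = q + 1"
proof -
  define h where "h = herm q a b"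
  define T where "T = {t. t * h + (t * h) ^ q = 0}"
  define g where "g = (\<lambda>t. pp (b + scale3 t a))"
  have "h \<noteq> 0"
    using herm_ne_0[OF assms] by (simp add: h_def)
  have "T = (\<lambda>s. s / h) ` {s. s + s ^ q = 0}"
    using \<open>h \<noteq> 0\<close> by (auto simp: T_def image_iff intro!: exI[of _ "_ * h"])
  moreover have "inj_on (\<lambda>s. s / h) {s. s + s ^ q = 0}"
    using \<open>h \<noteq> 0\<close> by (auto simp: inj_on_def)
  ultimately have card_T: "card T = q"
    using card_trace_fibre[of 0] q_ge_2 by (simp add: card_image subfield_def zero_power)
  have "g t \<in> herm_unital q \<longleftrightarrow> t \<in> T" for t
    unfolding g_def pp_mem_herm_unital_iff herm_line[OF assms(1,2)]
    using add_scale3_ne_0[OF assms(3)] by (simp add: T_def h_def)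
  moreover have "pp a \<in> herm_unital q"
    using assms by (auto simp: pp_mem_herm_unital_iff)
  ultimately have "PG_line (cross3 a b) \<inter> herm_unital q = insert (pp a) (g ` T)"
    unfolding PG_line_cross3_eq[OF assms(3)] by (auto simp: g_def)
  moreover have "pp a \<notin> g ` T" "inj_on g T"
    using pp_notin_range_pp_add_scale3[OF assms(3)] inj_pp_add_scale3[OF assms(3)]
    by (auto simp: g_def inj_on_def inj_def)
  ultimately show ?thesis
    using card_T by (simp add: card_image)
qed

lemma exists_secant_through:
  assumes "P \<in> herm_unital q" "Q \<in> (herm_unital q :: 'a vec3 set set)" "P \<noteq> Q"
  obtains L where "L \<in> secants q" "P \<in> L" "Q \<in> L"
proof -
  obtain a b where ab: "P = pp a" "Q = pp b" "a \<noteq> 0" "b \<noteq> 0" "herm q a a = 0" "herm q b b = 0"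
    using assms(1,2) unfolding herm_unital_eq by blast
  with assms(3) have "cross3 a b \<noteq> 0"
    using pp_eq_iff_cross3_eq_0 by blast
  then show ?thesis
    using that[of "PG_line (cross3 a b)"] ab card_PG_line_cross3_inter_herm_unital
    by (simp add: secants_def)
qed

section \<open>Counting points of the unital and secants through them\<close>

lemma subfield_diff: "x \<in> subfield \<Longrightarrow> y \<in> subfield \<Longrightarrow> x - y \<in> subfield"
  by (simp add: subfield_def frobenius_diff)

lemma card_norm_sum_eq:
  assumes "c \<in> subfield"
  shows "card {(y, z). y ^ (q + 1) + z ^ (q + 1) = c} =
    (if c = 0 then q ^ 3 + q ^ 2 - q else q ^ 3 - q)"
proof -
  define A where "A = {y :: 'a. y ^ (q + 1) = c}"
  have "{(y, z). y ^ (q + 1) + z ^ (q + 1) = c} = (SIGMA y:UNIV. {z. z ^ (q + 1) = c - y ^ (q + 1)})"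
    by (auto simp: algebra_simps)
  then have "card {(y, z). y ^ (q + 1) + z ^ (q + 1) = c} =
      (\<Sum>y\<in>UNIV. card {z. z ^ (q + 1) = c - y ^ (q + 1)})"
    by (simp add: card_SigmaI)
  also have "\<dots> = (\<Sum>y\<in>UNIV. if y \<in> A then 1 else q + 1)"
  proof (rule sum.cong)
    fix y :: 'a
    have "c - y ^ (q + 1) \<in> subfield"
      using assms norm_in_subfield by (rule subfield_diff)
    from card_norm_fibre[OF this] show "card {z. z ^ (q + 1) = c - y ^ (q + 1)} = (if y \<in> A then 1 else q + 1)"
      by (simp add: A_def eq_commute[of c])
  qed simp
  also have "\<dots> = card A + (q ^ 2 - card A) * (q + 1)"
    by (simp add: sum.If_cases Compl_eq_Diff_UNIV card_Diff_subset card_field flip: Diff_eq)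
  also have "card A = (if c = 0 then 1 else q + 1)"
    using card_norm_fibre[OF assms] by (simp add: A_def)
  moreover have "1 + (q ^ 2 - 1) * (q + 1) = q ^ 3 + q ^ 2 - q"
    using q_ge_2 by (induction q rule: dec_induct) (auto simp: algebra_simps power2_eq_square power3_eq_cube)
  moreover have "q + 1 + (q ^ 2 - (q + 1)) * (q + 1) = q ^ 3 - q"
    using q_ge_2 by (induction q rule: dec_induct) (auto simp: algebra_simps power2_eq_square power3_eq_cube)
  ultimately show ?thesis
    by simp
qed

lemma card_isotropic: "card {v :: 'a vec3. herm q v v = 0} = (q ^ 3 + 1) * (q ^ 2 - 1) + 1"
proof -
  have "{v :: 'a vec3. herm q v v = 0} = Sigma UNIV (\<lambda>x. {(y, z). y ^ (q + 1) + z ^ (q + 1) = - (x ^ (q + 1))})"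
    by (auto simp: add_eq_0_iff2 add.assoc)
  then have "card {v :: 'a vec3. herm q v v = 0} =
      (\<Sum>x \<in> (UNIV :: 'a set). card {(y, z). y ^ (q + 1) + z ^ (q + 1) = - (x ^ (q + 1))})"
    by (simp add: card_SigmaI)
  also have "\<dots> = (\<Sum>x \<in> (UNIV :: 'a set). if x = 0 then q ^ 3 + q ^ 2 - q else q ^ 3 - q)"
  proof (rule sum.cong)
    fix x :: 'a
    have "- (x ^ (q + 1)) \<in> subfield"
      using subfield_diff[OF _ norm_in_subfield, of 0] q_ge_2 by (simp add: subfield_def zero_power)
    from card_norm_sum_eq[OF this]
    show "card {(y, z). y ^ (q + 1) + z ^ (q + 1) = - (x ^ (q + 1))} = (if x = 0 then q ^ 3 + q ^ 2 - q else q ^ 3 - q)"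
      by simp
  qed simp
  also have "\<dots> = (q ^ 3 + q ^ 2 - q) + (q ^ 2 - 1) * (q ^ 3 - q)"
    by (simp add: sum.If_cases Compl_eq_Diff_UNIV card_Diff_singleton card_field flip: Diff_eq)
  also have "\<dots> = (q ^ 3 + 1) * (q ^ 2 - 1) + 1"
    using q_ge_2 by (induction q rule: dec_induct) (auto simp: algebra_simps power2_eq_square power3_eq_cube)
  finally show ?thesis .
qed

lemma card_herm_unital: "card (herm_unital q :: 'a vec3 set set) = q ^ 3 + 1"
proof -
  define I where "I = {v :: 'a vec3. v \<noteq> 0 \<and> herm q v v = 0}"
  have "card I = card (\<Union>(herm_unital q :: 'a vec3 set set))"
    by (simp add: I_def Union_herm_unital)
  also have "\<dots> = (\<Sum>X \<in> (herm_unital q :: 'a vec3 set set). card X)"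
    by (rule card_Union_disjoint[OF pairwise_disjnt_herm_unital]) simp
  also have "\<dots> = (\<Sum>X \<in> (herm_unital q :: 'a vec3 set set). q ^ 2 - 1)"
    by (intro sum.cong) (auto simp: herm_unital_eq card_pp card_field)
  finally have "card I = card (herm_unital q :: 'a vec3 set set) * (q ^ 2 - 1)"
    by simp
  moreover have "{v :: 'a vec3. herm q v v = 0} = insert 0 I"
    by (auto simp: I_def zero_prod_def)
  then have "card I = (q ^ 3 + 1) * (q ^ 2 - 1)"
    using card_isotropic by (simp add: I_def)
  moreover have "q ^ 2 - 1 \<noteq> 0"
    using one_less_power[of q 2] q_ge_2 by simp
  ultimately show ?thesis
    by (metis mult_right_cancel)
qed

lemma card_C_pt:
  assumes p: "p \<in> (herm_unital q :: 'a vec3 set set)"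
  shows "card (C_pt q p) = q ^ 2"
proof -
  define A where "A m = m \<inter> herm_unital q - {p}" for m :: "'a vec3 set set"
  have "herm_unital q - {p} = (\<Union>m\<in>C_pt q p. A m)"
  proof (intro equalityI subsetI)
    fix r assume "r \<in> herm_unital q - {p}"
    then obtain L where "L \<in> secants q" "p \<in> L" "r \<in> L"
      using exists_secant_through[OF p, of r] by auto
    with \<open>r \<in> herm_unital q - {p}\<close> show "r \<in> (\<Union>m\<in>C_pt q p. A m)"
      by (auto simp: A_def C_pt_def)
  qed (auto simp: A_def)
  moreover have "card (\<Union>m\<in>C_pt q p. A m) = (\<Sum>m\<in>C_pt q p. card (A m))"
  proof (rule card_UN_disjoint)
    show "\<forall>m\<in>C_pt q p. \<forall>m'\<in>C_pt q p. m \<noteq> m' \<longrightarrow> A m \<inter> A m' = {}"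
      using PG_lines_inter_eq_singleton secants_subset_PG_lines
      by (fastforce simp: A_def C_pt_def)
  qed simp_all
  moreover have "card (A m) = q" if "m \<in> C_pt q p" for m
    using that p by (simp add: A_def C_pt_def secants_def card_Diff_singleton)
  ultimately have "card (herm_unital q - {p}) = card (C_pt q p) * q"
    by simp
  moreover have "card (herm_unital q - {p}) = q ^ 3"
    using p card_herm_unital by (simp add: card_Diff_singleton)
  ultimately show ?thesis
    using q_ge_2 by (simp add: power2_eq_square power3_eq_cube)
qed

end

section \<open>The cliques in the neighbourhood of a secant\<close>

definition nbhd_clique :: "nat \<Rightarrow> 'a::field vec3 set set \<Rightarrow> 'a vec3 set \<Rightarrow> 'a vec3 set set set" where
  "nbhd_clique q l p = (if p \<in> l then C_pt q p - {l} else C_pt q p \<inter> nbhd q l)"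

lemma H_adj_iff:
  "H_adj q a b \<longleftrightarrow> a \<in> secants q \<and> b \<in> secants q \<and> a \<noteq> b \<and> (\<exists>p\<in>herm_unital q. p \<in> a \<and> p \<in> b)"
proof
  assume "H_adj q a b"
  then show "a \<in> secants q \<and> b \<in> secants q \<and> a \<noteq> b \<and> (\<exists>p\<in>herm_unital q. p \<in> a \<and> p \<in> b)"
    unfolding H_adj_def by blast
next
  assume adj: "a \<in> secants q \<and> b \<in> secants q \<and> a \<noteq> b \<and> (\<exists>p\<in>herm_unital q. p \<in> a \<and> p \<in> b)"
  then obtain p where "p \<in> herm_unital q" "p \<in> a" "p \<in> b"
    by blast
  moreover from this adj have "a \<inter> b = {p}"
    using PG_lines_inter_eq_singleton secants_subset_PG_lines by blast
  ultimately show "H_adj q a b"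
    unfolding H_adj_def using adj by blast
qed

lemma mem_nbhd_iff:
  assumes "l \<in> secants q"
  shows "m \<in> nbhd q l \<longleftrightarrow> m \<in> secants q \<and> m \<noteq> l \<and> (\<exists>r\<in>l \<inter> herm_unital q. r \<in> m)"
  unfolding nbhd_def mem_Collect_eq H_adj_iff using assms by blast

lemma is_clique_C_pt: "p \<in> herm_unital q \<Longrightarrow> is_clique q (C_pt q p)"
  unfolding is_clique_def H_adj_iff C_pt_def by blast

lemma is_clique_subset: "is_clique q K \<Longrightarrow> K' \<subseteq> K \<Longrightarrow> is_clique q K'"
  by (auto simp: is_clique_def)

lemma C_pt_two_lines_eq:
  assumes "a \<in> C_pt q p \<inter> C_pt q p'" "b \<in> C_pt q p \<inter> C_pt q p'" "a \<noteq> b"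
  shows "p = p'"
  using assms PG_lines_eq_if_two_points[of a b p p'] secants_subset_PG_lines
  unfolding C_pt_def by blast

lemma clique_edges_common_pair:
  assumes "e \<in> clique_edges A" "e \<in> clique_edges B"
  obtains a b where "a \<noteq> b" "a \<in> A \<inter> B" "b \<in> A \<inter> B"
  using assms by (auto simp: clique_edges_def doubleton_eq_iff)

lemma nbhd_clique_subset_C_pt: "nbhd_clique q l p \<subseteq> C_pt q p"
  by (auto simp: nbhd_clique_def)

lemma mem_nbhd_clique_iff:
  assumes "l \<in> secants q" "p \<in> herm_unital q"
  shows "m \<in> nbhd_clique q l p \<longleftrightarrow> m \<in> nbhd q l \<and> p \<in> m"
  using assms(2) by (auto simp: nbhd_clique_def C_pt_def mem_nbhd_iff[OF assms(1)])

lemma nbhd_clique_subset_nbhd: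
  assumes "l \<in> secants q" "p \<in> herm_unital q"
  shows "nbhd_clique q l p \<subseteq> nbhd q l"
  using mem_nbhd_clique_iff[OF assms] by blast

lemma is_clique_nbhd_clique: "p \<in> herm_unital q \<Longrightarrow> is_clique q (nbhd_clique q l p)"
  using is_clique_C_pt is_clique_subset nbhd_clique_subset_C_pt by blast

lemma nbhd_clique_on_line_disjoint:
  assumes "l \<in> secants q" "p \<in> l" "p' \<in> l" "p \<noteq> p'"
  shows "nbhd_clique q l p \<inter> nbhd_clique q l p' = {}"
proof (rule equals0I)
  fix m assume "m \<in> nbhd_clique q l p \<inter> nbhd_clique q l p'"
  then have "m \<in> C_pt q p \<inter> C_pt q p'" "m \<noteq> l"
    using assms(2,3) by (simp_all add: nbhd_clique_def)
  moreover have "l \<in> C_pt q p \<inter> C_pt q p'"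
    using assms(1-3) by (simp add: C_pt_def)
  ultimately have "p = p'"
    using C_pt_two_lines_eq by blast
  with assms(4) show False ..
qed

lemma nbhd_clique_off_line_eq:
  assumes "l \<in> secants q" "p \<notin> l"
  shows "nbhd_clique q l p = {m \<in> secants q. p \<in> m \<and> (\<exists>r\<in>l \<inter> herm_unital q. r \<in> m)}"
  using assms(2) by (auto simp: nbhd_clique_def C_pt_def mem_nbhd_iff[OF assms(1)])

lemma clique_edges_nbhd_clique_unique:
  assumes "e \<in> clique_edges (nbhd_clique q l p)" "e \<in> clique_edges (nbhd_clique q l p')"
  shows "p = p'"
proof -
  obtain a b where "a \<noteq> b" "a \<in> nbhd_clique q l p \<inter> nbhd_clique q l p'" "b \<in> nbhd_clique q l p \<inter> nbhd_clique q l p'"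
    using clique_edges_common_pair[OF assms] .
  then show ?thesis
    using C_pt_two_lines_eq nbhd_clique_subset_C_pt by blast
qed

lemma clique_edges_subset_ind_edges:
  assumes "l \<in> secants q" "p \<in> herm_unital q"
  shows "clique_edges (nbhd_clique q l p) \<subseteq> ind_edges q l"
proof
  fix e assume "e \<in> clique_edges (nbhd_clique q l p)"
  then obtain a b where ab: "e = {a, b}" "a \<noteq> b" "a \<in> nbhd_clique q l p" "b \<in> nbhd_clique q l p"
    unfolding clique_edges_def by blast
  then have "H_adj q a b"
    using is_clique_nbhd_clique[OF assms(2)] unfolding is_clique_def by blast
  moreover have "a \<in> nbhd q l" "b \<in> nbhd q l"
    using nbhd_clique_subset_nbhd[OF assms] ab(3,4) by blast+
  ultimately show "e \<in> ind_edges q l"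
    unfolding ind_edges_def using ab(1) by blast
qed

lemma ind_edges_eq:
  assumes "l \<in> secants q"
  shows "ind_edges q l = (\<Union>p\<in>herm_unital q. clique_edges (nbhd_clique q l p))"
proof (intro equalityI subsetI)
  fix e assume "e \<in> ind_edges q l"
  then obtain m1 m2 where e: "e = {m1, m2}" "m1 \<in> nbhd q l" "m2 \<in> nbhd q l" "H_adj q m1 m2"
    unfolding ind_edges_def by blast
  then obtain p where p: "p \<in> herm_unital q" "p \<in> m1" "p \<in> m2" "m1 \<noteq> m2"
    unfolding H_adj_iff by blast
  have "m1 \<in> nbhd_clique q l p" "m2 \<in> nbhd_clique q l p"
    using e(2,3) p(2,3) mem_nbhd_clique_iff[OF assms p(1)] by blast+
  then have "e \<in> clique_edges (nbhd_clique q l p)"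
    unfolding clique_edges_def using e(1) p(4) by blast
  with p(1) show "e \<in> (\<Union>p\<in>herm_unital q. clique_edges (nbhd_clique q l p))"
    by blast
qed (use clique_edges_subset_ind_edges[OF assms] in blast)

lemma clique_edges_subset_G_edges:
  assumes "l \<in> secants q" "p \<in> herm_unital q - l"
  shows "clique_edges (nbhd_clique q l p) \<subseteq> G_edges q l"
proof
  fix e assume "e \<in> clique_edges (nbhd_clique q l p)"
  then obtain a b where ab: "e = {a, b}" "a \<noteq> b" "a \<in> nbhd_clique q l p" "b \<in> nbhd_clique q l p"
    unfolding clique_edges_def by blast
  then have "a \<in> C_pt q p" "b \<in> C_pt q p"
    using nbhd_clique_subset_C_pt by blast+
  then have "a \<inter> b = {p}"
    using PG_lines_inter_eq_singleton[of a b p] secants_subset_PG_lines ab(2)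
    unfolding C_pt_def by blast
  moreover have "a \<in> nbhd q l" "b \<in> nbhd q l"
    using nbhd_clique_subset_nbhd[OF assms(1)] assms(2) ab(3,4) by blast+
  ultimately show "e \<in> G_edges q l"
    unfolding G_edges_def using ab(1,2) assms(2) by blast
qed

lemma G_edges_eq:
  assumes "l \<in> secants q"
  shows "G_edges q l = (\<Union>p\<in>herm_unital q - l. clique_edges (nbhd_clique q l p))"
proof (intro equalityI subsetI)
  fix e assume "e \<in> G_edges q l"
  then obtain m1 m2 p where e: "e = {m1, m2}" "m1 \<in> nbhd q l" "m2 \<in> nbhd q l" "m1 \<noteq> m2"
      "m1 \<inter> m2 = {p}" "p \<in> herm_unital q - l"
    unfolding G_edges_def by blast
  then have "m1 \<in> nbhd_clique q l p" "m2 \<in> nbhd_clique q l p"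
    using mem_nbhd_clique_iff[OF assms, of p] by blast+
  then have "e \<in> clique_edges (nbhd_clique q l p)"
    unfolding clique_edges_def using e(1,4) by blast
  with e(6) show "e \<in> (\<Union>p\<in>herm_unital q - l. clique_edges (nbhd_clique q l p))"
    by blast
qed (use clique_edges_subset_G_edges[OF assms] in blast)

lemma meet_nbhd:
  assumes "m \<in> nbhd q l"
  shows "l \<inter> m = {the_elem (l \<inter> m)}" "the_elem (l \<inter> m) \<in> herm_unital q"
proof -
  obtain r where "l \<inter> m = {r}" "r \<in> herm_unital q"
    using assms by (auto simp: nbhd_def H_adj_def)
  then show "l \<inter> m = {the_elem (l \<inter> m)}" "the_elem (l \<inter> m) \<in> herm_unital q"
    by simp_all
qed

lemma inj_on_meet_nbhd_clique_off_line:
  assumes "p \<notin> l"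
  shows "inj_on (\<lambda>m. the_elem (l \<inter> m)) (nbhd_clique q l p)"
proof (rule inj_onI)
  fix m m' assume m: "m \<in> nbhd_clique q l p" "m' \<in> nbhd_clique q l p"
    and eq: "the_elem (l \<inter> m) = the_elem (l \<inter> m')"
  have "m \<in> C_pt q p \<inter> nbhd q l" "m' \<in> C_pt q p \<inter> nbhd q l"
    using m assms by (simp_all add: nbhd_clique_def)
  then have mm': "m \<in> nbhd q l" "m' \<in> nbhd q l" "p \<in> m" "p \<in> m'" "m \<in> PG_lines" "m' \<in> PG_lines"
    using secants_subset_PG_lines by (auto simp: C_pt_def)
  define r where "r = the_elem (l \<inter> m)"
  have "l \<inter> m = {r}" "l \<inter> m' = {r}"
    using meet_nbhd(1)[OF mm'(1)] meet_nbhd(1)[OF mm'(2)] eq by (simp_all add: r_def)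
  with assms have "r \<in> m" "r \<in> m'" "r \<noteq> p"
    by auto
  with mm'(3-6) show "m = m'"
    using PG_lines_eq_if_two_points[of m m' p r] by blast
qed

context frobenius_field
begin

lemma card_nbhd_clique_on_line:
  fixes l :: "'a vec3 set set"
  assumes "l \<in> secants q" "p \<in> l \<inter> herm_unital q"
  shows "card (nbhd_clique q l p) = q ^ 2 - 1"
proof -
  have "l \<in> C_pt q p"
    using assms by (simp add: C_pt_def)
  then show ?thesis
    using assms card_C_pt[of p] by (simp add: nbhd_clique_def card_Diff_singleton)
qed

lemma image_meet_nbhd_clique_off_line:
  fixes l :: "'a vec3 set set"
  assumes "l \<in> secants q" "p \<in> herm_unital q - l"
  shows "(\<lambda>m. the_elem (l \<inter> m)) ` nbhd_clique q l p = l \<inter> herm_unital q"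
proof (intro equalityI subsetI)
  fix r assume "r \<in> (\<lambda>m. the_elem (l \<inter> m)) ` nbhd_clique q l p"
  then obtain m where "m \<in> nbhd q l" "r = the_elem (l \<inter> m)"
    using nbhd_clique_subset_nbhd[OF assms(1)] assms(2) by blast
  then show "r \<in> l \<inter> herm_unital q"
    using meet_nbhd[of m q l] by blast
next
  fix r assume r: "r \<in> l \<inter> herm_unital q"
  with assms(2) have "p \<noteq> r"
    by blast
  then obtain m where m: "m \<in> secants q" "p \<in> m" "r \<in> m"
    using exists_secant_through assms(2) r by blast
  with assms(2) r have "m \<in> nbhd q l"
    unfolding mem_nbhd_iff[OF assms(1)] by blast
  with assms m(2) have "m \<in> nbhd_clique q l p"
    using mem_nbhd_clique_iff by blast
  moreover have "l \<inter> m = {r}"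
    using meet_nbhd(1)[OF \<open>m \<in> nbhd q l\<close>] r m(3) by blast
  ultimately show "r \<in> (\<lambda>m. the_elem (l \<inter> m)) ` nbhd_clique q l p"
    by (metis image_eqI the_elem_eq)
qed

lemma card_nbhd_clique_off_line:
  fixes l :: "'a vec3 set set"
  assumes "l \<in> secants q" "p \<in> herm_unital q - l"
  shows "card (nbhd_clique q l p) = q + 1"
proof -
  have "bij_betw (\<lambda>m. the_elem (l \<inter> m)) (nbhd_clique q l p) (l \<inter> herm_unital q)"
    using inj_on_meet_nbhd_clique_off_line[of p l q] image_meet_nbhd_clique_off_line[OF assms] assms(2)
    by (simp add: bij_betw_def)
  then show ?thesis
    using assms(1) by (simp add: bij_betw_same_card secants_def)
qed

lemma inj_on_nbhd_clique:
  fixes l :: "'a vec3 set set"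
  assumes "l \<in> secants q"
  shows "inj_on (nbhd_clique q l) (herm_unital q - l)"
proof (rule inj_onI)
  fix p p' assume p: "p \<in> herm_unital q - l" and eq: "nbhd_clique q l p = nbhd_clique q l p'"
  have "Suc 1 \<le> card (nbhd_clique q l p)"
    using card_nbhd_clique_off_line[OF assms p] q_ge_2 by simp
  then obtain a B where aB: "nbhd_clique q l p = insert a B" "a \<notin> B" "1 \<le> card B"
    unfolding card_le_Suc_iff by blast
  then obtain b where "b \<in> B"
    by fastforce
  with aB have "a \<noteq> b" "a \<in> nbhd_clique q l p" "b \<in> nbhd_clique q l p"
    by auto
  with eq have "a \<in> C_pt q p \<inter> C_pt q p'" "b \<in> C_pt q p \<inter> C_pt q p'"
    using nbhd_clique_subset_C_pt[of q l p] nbhd_clique_subset_C_pt[of q l p'] by auto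
  with \<open>a \<noteq> b\<close> show "p = p'"
    using C_pt_two_lines_eq by blast
qed

lemma card_herm_unital_diff_secant:
  fixes l :: "'a vec3 set set"
  assumes "l \<in> secants q"
  shows "card (herm_unital q - l) = q ^ 3 - q"
proof -
  have "herm_unital q - l = herm_unital q - l \<inter> herm_unital q"
    by blast
  then have "card (herm_unital q - l) = card (herm_unital q :: 'a vec3 set set) - card (l \<inter> herm_unital q)"
    by (simp add: card_Diff_subset)
  then show ?thesis
    using assms card_herm_unital by (simp add: secants_def)
qed

end

theorem lemma2p4:
  fixes q :: nat and l :: "'a::{field,finite} vec3 set set"
  assumes "\<exists>p k. prime p \<and> k \<ge> 1 \<and> q = p ^ k"
    and "CARD('a) = q ^ 2"
    and "l \<in> secants q"
  defines "U \<equiv> (herm_unital q :: 'a vec3 set set)"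
    and "N \<equiv> nbhd q l"
    and "K \<equiv> (\<lambda>p. if p \<in> l then C_pt q p - {l} else C_pt q p \<inter> nbhd q l)"
  shows "card (l \<inter> U) = q + 1 \<and>
    (\<forall>p\<in>l \<inter> U. K p \<subseteq> N \<and> is_clique q (K p) \<and> card (K p) = q ^ 2 - 1) \<and>
    (\<forall>p\<in>l \<inter> U. \<forall>p'\<in>l \<inter> U. p \<noteq> p' \<longrightarrow> K p \<inter> K p' = {}) \<and>
    card (U - l) = q ^ 3 - q \<and>
    (\<forall>p\<in>U - l. K p \<subseteq> N \<and> is_clique q (K p) \<and> card (K p) = q + 1 \<and>
        K p = {m \<in> secants q. p \<in> m \<and> (\<exists>r\<in>l \<inter> U. r \<in> m)}) \<and>
    inj_on K (U - l) \<and>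
    ind_edges q l = (\<Union>p\<in>U. clique_edges (K p)) \<and>
    (\<forall>e\<in>ind_edges q l. \<exists>!p. p \<in> U \<and> e \<in> clique_edges (K p)) \<and>
    G_edges q l = (\<Union>p\<in>U - l. clique_edges (K p)) \<and>
    (\<forall>e\<in>G_edges q l. \<exists>!p. p \<in> U - l \<and> e \<in> clique_edges (K p))"
proof -
  interpret frobenius_field "TYPE('a)" q
    using frobenius_field_prime_power[OF assms(1,2)] .
  have K: "K = nbhd_clique q l"
    by (simp add: K_def nbhd_clique_def fun_eq_iff)
  have unique: "\<exists>!p. p \<in> A \<and> e \<in> clique_edges (K p)" if "e \<in> (\<Union>p\<in>A. clique_edges (K p))" for e A
    using that clique_edges_nbhd_clique_unique unfolding K by blast
  have ind: "ind_edges q l = (\<Union>p\<in>U. clique_edges (K p))"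
    unfolding K U_def by (rule ind_edges_eq[OF assms(3)])
  have G: "G_edges q l = (\<Union>p\<in>U - l. clique_edges (K p))"
    unfolding K U_def by (rule G_edges_eq[OF assms(3)])
  have "card (l \<inter> U) = q + 1"
    using assms(3) by (simp add: U_def secants_def)
  moreover have "\<forall>p\<in>l \<inter> U. K p \<subseteq> N \<and> is_clique q (K p) \<and> card (K p) = q ^ 2 - 1"
    using nbhd_clique_subset_nbhd[OF assms(3)] is_clique_nbhd_clique card_nbhd_clique_on_line[OF assms(3)]
    unfolding K U_def N_def by blast
  moreover have "\<forall>p\<in>l \<inter> U. \<forall>p'\<in>l \<inter> U. p \<noteq> p' \<longrightarrow> K p \<inter> K p' = {}"
    using nbhd_clique_on_line_disjoint[OF assms(3)] unfolding K by blast
  moreover have "\<forall>p\<in>U - l. K p \<subseteq> N \<and> is_clique q (K p) \<and> card (K p) = q + 1 \<and>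
      K p = {m \<in> secants q. p \<in> m \<and> (\<exists>r\<in>l \<inter> U. r \<in> m)}"
    using nbhd_clique_subset_nbhd[OF assms(3)] is_clique_nbhd_clique card_nbhd_clique_off_line[OF assms(3)]
      nbhd_clique_off_line_eq[OF assms(3)]
    unfolding K U_def N_def by blast
  moreover have "\<forall>e\<in>ind_edges q l. \<exists>!p. p \<in> U \<and> e \<in> clique_edges (K p)"
    using unique unfolding ind by blast
  moreover have "\<forall>e\<in>G_edges q l. \<exists>!p. p \<in> U - l \<and> e \<in> clique_edges (K p)"
    using unique unfolding G by blast
  ultimately show ?thesis
    using ind G card_herm_unital_diff_secant[OF assms(3)] inj_on_nbhd_clique[OF assms(3)]
    unfolding K U_def by blast
qed

end
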